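(* Let $X_1,X_2,\dots$ be independent integer-valued random variables with common distribution $F$, not concentrated on a half-axis, and let $S_0=0$, $S_n=X_1+\cdots+X_n$. Suppose $\mathbb E[X_1]<0$ and that for some $0<\xi<1$ and $0<r<1$, \[ P(X_1\ge x)=\xi\, r^x,\qquad x=0,1,2,\dots. \] Let $p=P(\sup_{n}S_n>0)$. Then $p<1$ and \[ P\Big(\sup_{n\ge0}S_n>x\Big)=p\,\big[1-(1-p)(1-r)\big]^x,\qquad x=0,1,2,\dots. \] Moreover, $1/[1-(1-p)(1-r)]$ is the unique root of the equation \[ \sum_{x=-\infty}^{\infty}s^x P(X_1=x)=1 \] in the range $1<s<1/r$. *)

theory Defs
  imports "HOL-Probability.Probability"
begin

text \<open>Mean of an integer distribution is negative, in the extended sense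
  (E X^+ < E X^-; this allows E X = -infinity as well as finite negative mean).\<close>
definition mean_negative :: "int pmf \<Rightarrow> bool" where
  "mean_negative F \<longleftrightarrow>
     (\<integral>\<^sup>+ x. ennreal (of_int (max x 0)) \<partial>measure_pmf F)
       < (\<integral>\<^sup>+ x. ennreal (of_int (max (- x) 0)) \<partial>measure_pmf F)"

definition not_on_half_axis :: "int pmf \<Rightarrow> bool" where
  "not_on_half_axis F \<longleftrightarrow>
     measure_pmf.prob F {0<..} > 0 \<and> measure_pmf.prob F {..<0} > 0"

text \<open>Random walk S_n = X_1 + ... + X_n, where X_(i+1) is represented by X i.\<close>
definition walk :: "(nat \<Rightarrow> 'a \<Rightarrow> int) \<Rightarrow> nat \<Rightarrow> 'a \<Rightarrow> int" where
  "walk X n \<omega> = (\<Sum>i<n. X i \<omega>)"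

end

theory Submission
  imports Defs
begin

text \<open>
  Let \<open>h z\<close> be the probability that the walk ever exceeds level \<open>z\<close>. Conditioning on
  the first step, \<open>h\<close> is the least nonnegative solution of
  \<open>h z = (\<Sum>t. pmf F t * h (z - t))\<close> for \<open>z \<ge> 0\<close> with \<open>h = 1\<close> on the negative axis.
  Because the right tail of \<open>F\<close> is geometric, for every root \<open>s = 1/q\<close> in \<open>(1, 1/r)\<close> of
  \<open>(\<Sum>t. s powi t * pmf F t) = 1\<close> the function that is \<open>1\<close> on the negative axis and
  \<open>c * q ^ z\<close> with \<open>c = (q - r) / (1 - r)\<close> on \<open>z \<ge> 0\<close> solves the same equations. The
  difference of the two solutions is nonnegative, harmonic, and vanishes on the negative axis and at
  infinity, hence vanishes identically by a maximum principle. So \<open>p = h 0 = c\<close>, which is the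
  claimed formula with \<open>q = 1 - (1 - p) * (1 - r)\<close>, and \<open>p\<close> determines the root.
  A root exists by the intermediate value theorem: the generating function is \<open>1\<close> at \<open>s = 1\<close>,
  drops below \<open>1\<close> just to the right of \<open>1\<close> because the mean is negative, and tends to
  infinity as \<open>s \<rightarrow> 1/r\<close>.
\<close>

lemma has_sum_pmf: "(pmf p has_sum measure_pmf.prob p A) A"
proof -
  have abs: "Infinite_Set_Sum.abs_summable_on (pmf p) A" by (rule pmf_abs_summable)
  hence "pmf p summable_on A"
    using abs_summable_equivalent[of "pmf p" A] summable_on_iff_abs_summable_on_real[of "pmf p" A]
    by blast
  moreover have "infsum (pmf p) A = measure_pmf.prob p A"
    using infsetsum_infsum[OF abs] measure_pmf_conv_infsetsum[of p A] by simp
  ultimately show ?thesis using has_sum_iff by blast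
qed

lemma nn_integral_measure_pmf_has_sum:
  fixes w :: "'a \<Rightarrow> real"
  assumes sum: "((\<lambda>t. pmf p t * w t) has_sum V) UNIV" and nonneg: "\<And>t. 0 \<le> w t"
  shows "(\<integral>\<^sup>+ t. ennreal (w t) \<partial>measure_pmf p) = ennreal V"
proof -
  let ?g = "\<lambda>t. pmf p t * w t"
  have abs: "Infinite_Set_Sum.abs_summable_on ?g UNIV"
    using has_sum_imp_summable[OF sum] abs_summable_equivalent[of ?g UNIV]
      summable_on_iff_abs_summable_on_real[of ?g UNIV] by blast
  have "(\<integral>\<^sup>+ t. ennreal (w t) \<partial>measure_pmf p) = (\<integral>\<^sup>+ t. ennreal (?g t) \<partial>count_space UNIV)"
    by (simp add: nn_integral_measure_pmf ennreal_mult')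
  also have "\<dots> = ennreal (infsetsum ?g UNIV)"
    using nn_integral_conv_infsetsum[OF abs] nonneg by simp
  also have "infsetsum ?g UNIV = V"
    using infsetsum_infsum[OF abs] sum infsumI by metis
  finally show ?thesis .
qed

section \<open>Exceedance probabilities of a random walk\<close>

definition exceeds :: "int \<Rightarrow> int stream \<Rightarrow> bool" where
  "exceeds z s \<longleftrightarrow> (\<exists>n. z < sum_list (stake n s))"

definition exceeds_within :: "nat \<Rightarrow> int \<Rightarrow> int stream \<Rightarrow> bool" where
  "exceeds_within N z s \<longleftrightarrow> (\<exists>n\<le>N. z < sum_list (stake n s))"

lemma exceeds_Cons: "exceeds z (t ## s) \<longleftrightarrow> z < 0 \<or> exceeds (z - t) s"
proof -
  have "(\<exists>n. P n) \<longleftrightarrow> P 0 \<or> (\<exists>n. P (Suc n))" for P :: "nat \<Rightarrow> bool"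
    by (metis not0_implies_Suc)
  from this[of "\<lambda>n. z < sum_list (stake n (t ## s))"] show ?thesis
    by (simp add: exceeds_def algebra_simps)
qed

lemma exceeds_within_Suc_Cons:
  "exceeds_within (Suc N) z (t ## s) \<longleftrightarrow> z < 0 \<or> exceeds_within N (z - t) s"
proof -
  have "(\<exists>n\<le>Suc N. P n) \<longleftrightarrow> P 0 \<or> (\<exists>n\<le>N. P (Suc n))" for P :: "nat \<Rightarrow> bool"
    by (metis Suc_le_mono not0_implies_Suc zero_le)
  from this[of "\<lambda>n. z < sum_list (stake n (t ## s))"] show ?thesis
    by (simp add: exceeds_within_def algebra_simps)
qed

lemma exceeds_within_0: "exceeds_within 0 z s \<longleftrightarrow> z < 0"
  by (simp add: exceeds_within_def)

lemma exceeds_neg: "z < 0 \<Longrightarrow> exceeds z s"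
  by (auto simp: exceeds_def intro!: exI[of _ 0])

lemma exceeds_within_neg: "z < 0 \<Longrightarrow> exceeds_within N z s"
  by (auto simp: exceeds_within_def intro!: exI[of _ 0])

lemma exceeds_eq_Union_exceeds_within: "{s. exceeds z s} = (\<Union>N. {s. exceeds_within N z s})"
  by (auto simp: exceeds_def exceeds_within_def)

lemma incseq_exceeds_within: "incseq (\<lambda>N. {s. exceeds_within N z s})"
  by (auto simp: incseq_def exceeds_within_def intro: order_trans)

context
  fixes F :: "int pmf"
begin

abbreviation walk_space :: "int stream measure" where
  "walk_space \<equiv> stream_space (measure_pmf F)"

lemma space_walk_space [simp]: "space walk_space = UNIV"
  by (simp add: space_stream_space)

lemma prob_space_walk_space: "prob_space walk_space"
  by (rule prob_space.prob_space_stream_space[OF prob_space_measure_pmf])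

lemma pred_stake: "Measurable.pred walk_space (\<lambda>s. P (stake n s))"
proof -
  have "sets walk_space = sets (stream_space (count_space UNIV))"
    by (rule sets_stream_space_cong) simp
  hence "stake n \<in> measurable walk_space (count_space UNIV)"
    unfolding measurable_cong_sets[OF _ refl] by measurable
  thus ?thesis by (rule measurable_compose) simp
qed

lemma sets_exceeds: "{s. exceeds z s} \<in> sets walk_space"
proof -
  have "{s \<in> space walk_space. exceeds z s} \<in> sets walk_space"
    unfolding exceeds_def by (intro predE pred_intros_countable(2) pred_stake)
  thus ?thesis by simp
qed

lemma sets_exceeds_within: "{s. exceeds_within N z s} \<in> sets walk_space"
proof -
  have "{s \<in> space walk_space. exceeds_within N z s} \<in> sets walk_space"
    unfolding exceeds_within_def by (intro predE pred_intros_countable(2) pred_stake)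
  thus ?thesis by simp
qed

lemma emeasure_exceeds_first_step:
  assumes "0 \<le> z"
  shows "emeasure walk_space {s. exceeds z s}
    = (\<integral>\<^sup>+ t. emeasure walk_space {s. exceeds (z - t) s} \<partial>measure_pmf F)"
proof -
  have "emeasure walk_space {s. exceeds z s}
      = (\<integral>\<^sup>+ t. emeasure walk_space {s. t ## s \<in> {s. exceeds z s}} \<partial>measure_pmf F)"
    using prob_space.emeasure_stream_space[OF prob_space_measure_pmf sets_exceeds] by simp
  also have "\<dots> = (\<integral>\<^sup>+ t. emeasure walk_space {s. exceeds (z - t) s} \<partial>measure_pmf F)"
    using assms by (simp add: exceeds_Cons)
  finally show ?thesis .
qed

lemma emeasure_exceeds_within_Suc:
  assumes "0 \<le> z"
  shows "emeasure walk_space {s. exceeds_within (Suc N) z s}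
    = (\<integral>\<^sup>+ t. emeasure walk_space {s. exceeds_within N (z - t) s} \<partial>measure_pmf F)"
proof -
  have "emeasure walk_space {s. exceeds_within (Suc N) z s}
      = (\<integral>\<^sup>+ t. emeasure walk_space {s. t ## s \<in> {s. exceeds_within (Suc N) z s}} \<partial>measure_pmf F)"
    using prob_space.emeasure_stream_space[OF prob_space_measure_pmf sets_exceeds_within] by simp
  also have "\<dots> = (\<integral>\<^sup>+ t. emeasure walk_space {s. exceeds_within N (z - t) s} \<partial>measure_pmf F)"
    using assms by (simp add: exceeds_within_Suc_Cons)
  finally show ?thesis .
qed

lemma emeasure_exceeds_within_le_supersolution:
  fixes G :: "int \<Rightarrow> ennreal"
  assumes neg: "\<And>z. z < 0 \<Longrightarrow> 1 \<le> G z"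
    and super: "\<And>z. 0 \<le> z \<Longrightarrow> (\<integral>\<^sup>+ t. G (z - t) \<partial>measure_pmf F) \<le> G z"
  shows "emeasure walk_space {s. exceeds_within N z s} \<le> G z"
proof (induction N arbitrary: z)
  case 0
  show ?case
    using neg prob_space.emeasure_space_1[OF prob_space_walk_space]
    by (cases "z < 0") (simp_all add: exceeds_within_0)
next
  case (Suc N)
  show ?case
  proof (cases "z < 0")
    case True
    thus ?thesis
      using neg prob_space.emeasure_space_1[OF prob_space_walk_space]
      by (simp add: exceeds_within_neg)
  next
    case False
    hence "emeasure walk_space {s. exceeds_within (Suc N) z s}
        = (\<integral>\<^sup>+ t. emeasure walk_space {s. exceeds_within N (z - t) s} \<partial>measure_pmf F)"
      by (intro emeasure_exceeds_within_Suc) simp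
    also have "\<dots> \<le> (\<integral>\<^sup>+ t. G (z - t) \<partial>measure_pmf F)"
      by (intro nn_integral_mono Suc.IH)
    also have "\<dots> \<le> G z" using False by (intro super) simp
    finally show ?thesis .
  qed
qed

lemma emeasure_exceeds_le_supersolution:
  fixes G :: "int \<Rightarrow> ennreal"
  assumes "\<And>z. z < 0 \<Longrightarrow> 1 \<le> G z"
    and "\<And>z. 0 \<le> z \<Longrightarrow> (\<integral>\<^sup>+ t. G (z - t) \<partial>measure_pmf F) \<le> G z"
  shows "emeasure walk_space {s. exceeds z s} \<le> G z"
proof -
  have "emeasure walk_space {s. exceeds z s} = (SUP N. emeasure walk_space {s. exceeds_within N z s})"
    unfolding exceeds_eq_Union_exceeds_within
    using sets_exceeds_within incseq_exceeds_within by (intro SUP_emeasure_incseq[symmetric]) auto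
  also have "\<dots> \<le> G z"
    using emeasure_exceeds_within_le_supersolution[OF assms] by (intro SUP_least)
  finally show ?thesis .
qed

definition exceed_prob :: "int \<Rightarrow> real" where
  "exceed_prob z = measure walk_space {s. exceeds z s}"

lemma emeasure_exceeds: "emeasure walk_space {s. exceeds z s} = ennreal (exceed_prob z)"
  unfolding exceed_prob_def
  by (rule finite_measure.emeasure_eq_measure[OF prob_space.finite_measure[OF prob_space_walk_space]])

lemma exceed_prob_neg: "z < 0 \<Longrightarrow> exceed_prob z = 1"
  using prob_space.prob_space[OF prob_space_walk_space] by (simp add: exceed_prob_def exceeds_neg)

lemma exceed_prob_nonneg: "0 \<le> exceed_prob z"
  by (simp add: exceed_prob_def)

lemma exceed_prob_le_1: "exceed_prob z \<le> 1"
  unfolding exceed_prob_def by (rule prob_space.prob_le_1[OF prob_space_walk_space])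

lemma exceed_prob_harmonic:
  assumes "0 \<le> x"
  shows "((\<lambda>t. pmf F t * exceed_prob (x - t)) has_sum exceed_prob x) UNIV"
proof -
  have "(\<lambda>t. pmf F t * exceed_prob (x - t)) summable_on UNIV"
    using has_sum_imp_summable[OF has_sum_pmf[of F UNIV]]
    by (rule summable_on_comparison_test)
       (auto simp: exceed_prob_nonneg exceed_prob_le_1 mult_left_le)
  then obtain V where V: "((\<lambda>t. pmf F t * exceed_prob (x - t)) has_sum V) UNIV"
    using has_sum_infsum by blast
  have "ennreal (exceed_prob x) = (\<integral>\<^sup>+ t. ennreal (exceed_prob (x - t)) \<partial>measure_pmf F)"
    using emeasure_exceeds_first_step[OF assms] by (simp only: emeasure_exceeds)
  also have "\<dots> = ennreal V"
    by (rule nn_integral_measure_pmf_has_sum[OF V exceed_prob_nonneg])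
  finally have "ennreal (exceed_prob x) = ennreal V" .
  moreover have "0 \<le> V"
    using V by (rule has_sum_nonneg) (intro mult_nonneg_nonneg pmf_nonneg exceed_prob_nonneg)
  ultimately have "exceed_prob x = V"
    using exceed_prob_nonneg by simp
  thus ?thesis using V by simp
qed

lemma exceed_prob_le_supersolution:
  fixes g :: "int \<Rightarrow> real"
  assumes nonneg: "\<And>z. 0 \<le> g z" and neg: "\<And>z. z < 0 \<Longrightarrow> 1 \<le> g z"
    and super: "\<And>z. 0 \<le> z \<Longrightarrow> ((\<lambda>t. pmf F t * g (z - t)) has_sum g z) UNIV"
  shows "exceed_prob z \<le> g z"
proof -
  have "ennreal (exceed_prob z) \<le> ennreal (g z)"
    unfolding emeasure_exceeds[symmetric]
    by (rule emeasure_exceeds_le_supersolution)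
       (simp_all add: neg nn_integral_measure_pmf_has_sum[OF super nonneg])
  thus ?thesis using nonneg by simp
qed

end

lemma sum_list_stake: "sum_list (stake n s) = (\<Sum>i<n. s !! i)"
  by (induction n) (simp_all add: stake_Suc del: stake.simps(2))

lemma iid_to_stream:
  fixes M :: "'a measure" and X :: "nat \<Rightarrow> 'a \<Rightarrow> 'b" and F :: "'b pmf"
  assumes "prob_space M"
    and indep: "prob_space.indep_vars M (\<lambda>_. count_space UNIV) X UNIV"
    and distr: "\<And>i. distr M (count_space UNIV) (X i) = measure_pmf F"
  defines "Y \<equiv> \<lambda>\<omega>. to_stream (\<lambda>i. X i \<omega>)"
  shows "Y \<in> measurable M (stream_space (measure_pmf F))"
    and "distr M (stream_space (measure_pmf F)) Y = stream_space (measure_pmf F)"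
proof -
  interpret prob_space M by fact
  have rv: "random_variable (count_space UNIV) (X i)" for i
    using indep unfolding indep_vars_def by auto
  define Z where "Z = (\<lambda>\<omega>. \<lambda>i\<in>UNIV. X i \<omega>)"
  have Y: "Y = to_stream \<circ> Z"
    by (auto simp: Z_def Y_def fun_eq_iff restrict_UNIV)
  have Z: "Z \<in> measurable M (\<Pi>\<^sub>M i\<in>UNIV. measure_pmf F)"
    unfolding Z_def using rv by (intro measurable_restrict) simp
  show "Y \<in> measurable M (stream_space (measure_pmf F))"
    unfolding Y using measurable_to_stream Z by (rule measurable_comp[rotated])
  have joint: "distr M (\<Pi>\<^sub>M i\<in>UNIV. count_space UNIV) Z = (\<Pi>\<^sub>M i\<in>UNIV. measure_pmf F)"
    using indep_vars_iff_distr_eq_PiM[of UNIV X "\<lambda>_. count_space UNIV"] rv indep distr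
    unfolding Z_def by simp
  have product: "distr M (\<Pi>\<^sub>M i\<in>UNIV. measure_pmf F) Z = (\<Pi>\<^sub>M i\<in>UNIV. measure_pmf F)"
    unfolding joint[symmetric] by (intro distr_cong refl sets_PiM_cong) auto
  have "stream_space (measure_pmf F)
      = distr (\<Pi>\<^sub>M i\<in>UNIV. measure_pmf F) (stream_space (measure_pmf F)) to_stream"
    by (rule stream_space_eq_distr)
  also have "\<dots> = distr M (stream_space (measure_pmf F)) Y"
    unfolding Y by (subst product[symmetric]) (rule distr_distr[OF measurable_to_stream Z])
  finally show "distr M (stream_space (measure_pmf F)) Y = stream_space (measure_pmf F)" ..
qed

lemma measure_walk_exceeds:
  fixes M :: "'a measure" and X :: "nat \<Rightarrow> 'a \<Rightarrow> int" and F :: "int pmf"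
  assumes "prob_space M"
    and "prob_space.indep_vars M (\<lambda>_. count_space UNIV) X UNIV"
    and "\<And>i. distr M (count_space UNIV) (X i) = measure_pmf F"
  shows "measure M {\<omega> \<in> space M. \<exists>n. walk X n \<omega> > z} = exceed_prob F z"
proof -
  let ?Y = "\<lambda>\<omega>. to_stream (\<lambda>i. X i \<omega>)"
  have "exceed_prob F z = measure (distr M (walk_space F) ?Y) {s. exceeds z s}"
    unfolding exceed_prob_def iid_to_stream(2)[OF assms] ..
  also have "\<dots> = measure M (?Y -` {s. exceeds z s} \<inter> space M)"
    using iid_to_stream(1)[OF assms] sets_exceeds by (rule measure_distr)
  also have "?Y -` {s. exceeds z s} \<inter> space M = {\<omega> \<in> space M. \<exists>n. walk X n \<omega> > z}"
    by (auto simp: exceeds_def sum_list_stake walk_def to_stream_def)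
  finally show ?thesis ..
qed

text \<open>Maximum principle: \<open>d\<close> attains its maximum at some \<open>x \<ge> 0\<close>; as the jump from
  \<open>x\<close> to \<open>-1\<close> has positive probability, the first-step average at \<open>x\<close> is strictly
  smaller than \<open>d x\<close> unless \<open>d x = 0\<close>.\<close>

lemma harmonic_vanishing_eq_0:
  fixes F :: "int pmf" and d :: "int \<Rightarrow> real"
  assumes nonneg: "\<And>z. 0 \<le> d z" and neg: "\<And>z. z < 0 \<Longrightarrow> d z = 0"
    and decay: "(d \<longlongrightarrow> 0) at_top"
    and harmonic: "\<And>x. 0 \<le> x \<Longrightarrow> ((\<lambda>t. pmf F t * d (x - t)) has_sum d x) UNIV"
    and up: "\<And>k. 0 < k \<Longrightarrow> 0 < pmf F k"
  shows "d y = 0"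
proof (rule ccontr)
  assume "d y \<noteq> 0"
  hence dy: "0 < d y" using nonneg[of y] by simp
  have "\<exists>x. 0 \<le> x \<and> d y \<le> d x \<and> (\<forall>z. d z \<le> d x)"
  proof -
    obtain K where K: "\<And>z. K \<le> z \<Longrightarrow> d z < d y"
      using order_tendstoD(2)[OF decay dy] by (auto simp: eventually_at_top_linorder)
    define S where "S = {0..max K y}"
    have y: "y \<in> S" using dy neg[of y] by (cases "y < 0") (auto simp: S_def)
    have "Max (d ` S) \<in> d ` S" using y by (intro Max_in) (auto simp: S_def)
    then obtain x where x: "x \<in> S" "d x = Max (d ` S)" by auto
    have in_S: "d z \<le> d x" if "z \<in> S" for z
      using that x by (simp add: S_def)
    hence "d y \<le> d x" using y .
    moreover have "d z \<le> d x" for z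
    proof -
      consider "z < 0" | "z \<in> S" | "K \<le> z" by (force simp: S_def)
      thus ?thesis
        using neg[of z] nonneg[of x] in_S[of z] K[of z] \<open>d y \<le> d x\<close> by cases auto
    qed
    ultimately show ?thesis using x(1) by (auto simp: S_def)
  qed
  then obtain x where x: "0 \<le> x" "d y \<le> d x" and max: "\<And>z. d z \<le> d x"
    by blast
  have "(pmf F has_sum 1) UNIV" using has_sum_pmf[of F UNIV] by simp
  hence const: "((\<lambda>t. pmf F t * d x) has_sum d x) UNIV"
    using has_sum_cmult_right[of "pmf F" UNIV 1 "d x"] by (simp add: mult.commute)
  have strict: "pmf F (x + 1) * d (x - (x + 1)) < pmf F (x + 1) * d x"
    using up[of "x + 1"] x dy neg[of "-1"] by simp
  have "d x < d x"
    by (rule has_sum_strict_mono[OF harmonic[OF x(1)] const _ UNIV_I strict])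
       (simp add: max mult_left_mono)
  thus False by simp
qed

lemma mult_one_minus_power_le:
  fixes u :: real
  assumes "0 \<le> u" "u \<le> 1"
  shows "real n * (1 - u) * u ^ n \<le> 1 - u ^ n"
proof (induction n)
  case (Suc n)
  have "real (Suc n) * (1 - u) * u ^ Suc n \<le> real (Suc n) * (1 - u) * u ^ n"
    using assms by (intro mult_left_mono) (auto simp: mult_left_le_one_le)
  also have "\<dots> = real n * (1 - u) * u ^ n + (1 - u) * u ^ n" by (simp add: algebra_simps)
  also have "\<dots> \<le> 1 - u ^ Suc n" using Suc by (simp add: algebra_simps)
  finally show ?case .
qed simp

lemma power_nat_diff_eq_powi:
  fixes q :: real
  assumes "0 < q" "t \<le> int m"
  shows "q ^ nat (int m - t) = q ^ m * (1 / q) powi t"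
proof (cases "0 \<le> t")
  case True
  define k where "k = nat t"
  have k: "t = int k" "k \<le> m" using True assms(2) by (auto simp: k_def)
  hence "q ^ m = q ^ (m - k) * q ^ k" by (simp add: power_add[symmetric])
  thus ?thesis using k assms by (simp add: power_int_def power_one_over nat_diff_distrib)
next
  case False
  define k where "k = nat (- t)"
  have k: "t = - int k" using False by (simp add: k_def)
  hence "nat (int m - t) = m + k" by simp
  thus ?thesis using k assms False by (simp add: power_int_def power_add power_one_over)
qed

section \<open>Increments with a geometric right tail\<close>

locale geometric_right_tail =
  fixes F :: "int pmf" and \<xi> r :: real
  assumes xi: "0 < \<xi>" and r: "0 < r" "r < 1"
    and tail: "\<And>x::nat. measure_pmf.prob F {int x..} = \<xi> * r ^ x"
begin

lemma pmf_of_nat: "pmf F (int k) = \<xi> * (1 - r) * r ^ k"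
proof -
  have "measure_pmf.prob F {int k..} = measure_pmf.prob F ({int k} \<union> {int (Suc k)..})"
    by (rule arg_cong[where f="measure_pmf.prob F"]) auto
  also have "\<dots> = pmf F (int k) + measure_pmf.prob F {int (Suc k)..}"
    by (subst measure_pmf.finite_measure_Union) (auto simp: measure_pmf_single)
  finally show ?thesis using tail[of k] tail[of "Suc k"] by (simp add: algebra_simps)
qed

lemma pmf_pos: "0 < k \<Longrightarrow> 0 < pmf F k"
  using pmf_of_nat[of "nat k"] xi r by simp

lemma pmf_greater_has_sum: "(pmf F has_sum \<xi> * r ^ Suc m) {int m<..}"
proof -
  have "{int m<..} = {int (Suc m)..}" by auto
  thus ?thesis using has_sum_pmf[of F "{int m<..}"] tail[of "Suc m"] by simp
qed

text \<open>The generating function is split at \<open>0\<close>: over \<open>t < 0\<close> it is a power series in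
  \<open>1/s\<close> (which gives continuity), over \<open>t \<ge> 0\<close> a geometric series, convergent for
  \<open>s < 1/r\<close>.\<close>

definition left_weight :: "nat \<Rightarrow> real" where
  "left_weight n = (if n = 0 then 0 else pmf F (- int n))"

definition left_gf :: "real \<Rightarrow> real" where
  "left_gf u = (\<Sum>n. left_weight n * u ^ n)"

definition gen_fun :: "real \<Rightarrow> real" where
  "gen_fun s = left_gf (1 / s) + \<xi> * (1 - r) / (1 - r * s)"

lemma left_weight_nonneg: "0 \<le> left_weight n"
  by (simp add: left_weight_def)

lemma has_sum_left_weight: "(left_weight has_sum measure_pmf.prob F {..<0}) UNIV"
proof -
  have "(pmf F has_sum measure_pmf.prob F {..<0}) {..<0}
      \<longleftrightarrow> (left_weight has_sum measure_pmf.prob F {..<0}) {1..}"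
    by (rule has_sum_reindex_bij_witness[where i="\<lambda>n. - int n" and j="\<lambda>t. nat (- t)"])
       (auto simp: left_weight_def)
  hence "(left_weight has_sum measure_pmf.prob F {..<0}) {1..}" using has_sum_pmf by blast
  thus ?thesis by (subst has_sum_cong_neutral[where T="{1..}"]) (auto simp: left_weight_def)
qed

lemma summable_left_gf:
  assumes "0 \<le> u" "u \<le> 1"
  shows "summable (\<lambda>n. left_weight n * u ^ n)"
proof (rule summable_comparison_test')
  show "summable left_weight"
    using has_sum_imp_sums[OF has_sum_left_weight] by (auto simp: sums_iff)
  show "norm (left_weight n * u ^ n) \<le> left_weight n" for n
    using assms left_weight_nonneg[of n] by (simp add: mult_left_le power_le_one)
qed

lemma left_gf_nonneg: "0 \<le> u \<Longrightarrow> u \<le> 1 \<Longrightarrow> 0 \<le> left_gf u"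
  unfolding left_gf_def
  by (intro suminf_nonneg summable_left_gf) (auto intro: mult_nonneg_nonneg left_weight_nonneg)

lemma gen_fun_left_has_sum:
  assumes "1 \<le> s"
  shows "((\<lambda>t. s powi t * pmf F t) has_sum left_gf (1 / s)) {..<0}"
proof -
  have "(\<lambda>n. left_weight n * (1 / s) ^ n) sums left_gf (1 / s)"
    unfolding left_gf_def using assms by (intro summable_sums summable_left_gf) auto
  hence "((\<lambda>n. left_weight n * (1 / s) ^ n) has_sum left_gf (1 / s)) UNIV"
    by (rule sums_nonneg_imp_has_sum) (use assms in \<open>simp add: left_weight_nonneg\<close>)
  hence "((\<lambda>n. left_weight n * (1 / s) ^ n) has_sum left_gf (1 / s)) {1..}"
    by (subst (asm) has_sum_cong_neutral[where T="{1..}"]) (auto simp: left_weight_def)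
  moreover have "((\<lambda>t. s powi t * pmf F t) has_sum left_gf (1 / s)) {..<0}
      \<longleftrightarrow> ((\<lambda>n. left_weight n * (1 / s) ^ n) has_sum left_gf (1 / s)) {1..}"
    by (rule has_sum_reindex_bij_witness[where i="\<lambda>n. - int n" and j="\<lambda>t. nat (- t)"])
       (auto simp: left_weight_def power_int_def power_one_over field_simps)
  ultimately show ?thesis by simp
qed

lemma gen_fun_right_has_sum:
  assumes "0 < s" "s < 1 / r"
  shows "((\<lambda>t. s powi t * pmf F t) has_sum \<xi> * (1 - r) / (1 - r * s)) {0..}"
proof -
  have rs: "0 \<le> r * s" "r * s < 1" using assms r by (auto simp: field_simps)
  have "((\<lambda>k. (r * s) ^ k) has_sum 1 / (1 - r * s)) UNIV"
    using geometric_sums[of "r * s"] rs by (intro sums_nonneg_imp_has_sum) auto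
  from has_sum_cmult_right[OF this, of "\<xi> * (1 - r)"]
  have "((\<lambda>k. \<xi> * (1 - r) * (r * s) ^ k) has_sum \<xi> * (1 - r) / (1 - r * s)) UNIV"
    by simp
  moreover have "((\<lambda>t. s powi t * pmf F t) has_sum \<xi> * (1 - r) / (1 - r * s)) {0..}
      \<longleftrightarrow> ((\<lambda>k. \<xi> * (1 - r) * (r * s) ^ k) has_sum \<xi> * (1 - r) / (1 - r * s)) UNIV"
  proof (rule has_sum_reindex_bij_witness[where i="\<lambda>n. int n" and j="\<lambda>t. nat t"])
    fix t :: int
    assume "t \<in> {0..}"
    thus "\<xi> * (1 - r) * (r * s) ^ nat t = s powi t * pmf F t"
      using pmf_of_nat[of "nat t"] by (simp add: power_int_def power_mult_distrib)
  qed auto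
  ultimately show ?thesis by simp
qed

lemma gen_fun_has_sum:
  assumes "1 \<le> s" "s < 1 / r"
  shows "((\<lambda>t. s powi t * pmf F t) has_sum gen_fun s) UNIV"
proof -
  have "((\<lambda>t. s powi t * pmf F t) has_sum gen_fun s) ({..<0} \<union> {0..})"
    unfolding gen_fun_def using assms
    by (intro has_sum_Un_disjoint gen_fun_left_has_sum gen_fun_right_has_sum) auto
  moreover have "{..<0} \<union> {0..} = (UNIV :: int set)" by auto
  ultimately show ?thesis by simp
qed

lemma gen_fun_1: "gen_fun 1 = 1"
proof -
  have "((\<lambda>t. 1 powi t * pmf F t) has_sum gen_fun 1) UNIV"
    using r by (intro gen_fun_has_sum) auto
  moreover have "((\<lambda>t. 1 powi t * pmf F t) has_sum 1) UNIV"
    using has_sum_pmf[of F UNIV] by simp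
  ultimately show ?thesis using has_sum_unique by blast
qed

lemma isCont_gen_fun:
  assumes "1 < s" "s < 1 / r"
  shows "isCont gen_fun s"
proof -
  have "isCont (\<lambda>u. \<Sum>n. left_weight n * u ^ n) (1 / s)"
    by (rule isCont_powser[OF summable_left_gf[of 1]]) (use assms in auto)
  moreover have "isCont (\<lambda>s. 1 / s) s" using assms by (intro continuous_intros) auto
  ultimately have "isCont (\<lambda>s. left_gf (1 / s)) s"
    unfolding left_gf_def by (rule isCont_o2[rotated])
  moreover have "1 - r * s \<noteq> 0" using assms r by (simp add: field_simps)
  ultimately show ?thesis
    unfolding gen_fun_def[abs_def] by (intro continuous_intros) auto
qed

lemma positive_part_mean_ge:
  "ennreal (\<xi> * r / (1 - r)) \<le> (\<integral>\<^sup>+ x. ennreal (of_int (max x 0)) \<partial>measure_pmf F)"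
proof -
  define S where "S m = \<xi> * (1 - r) * (\<Sum>k<m. r ^ k * real k)" for m
  have partial: "ennreal (S m) \<le> (\<integral>\<^sup>+ x. ennreal (of_int (max x 0)) \<partial>measure_pmf F)" for m
  proof -
    have "ennreal (S m) = (\<Sum>k<m. ennreal (of_int (max (int k) 0)) * pmf F (int k))"
      unfolding S_def sum_distrib_left using xi r
      by (simp add: sum_ennreal[symmetric] pmf_of_nat ennreal_mult'' mult_ac)
    also have "\<dots> = (\<integral>\<^sup>+ x. ennreal (of_int (max x 0)) * indicator (int ` {..<m}) x \<partial>measure_pmf F)"
      by (subst nn_integral_measure_pmf_support[where A="int ` {..<m}"]) (auto simp: sum.reindex)
    also have "\<dots> \<le> (\<integral>\<^sup>+ x. ennreal (of_int (max x 0)) \<partial>measure_pmf F)"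
      by (intro nn_integral_mono) (auto split: split_indicator)
    finally show ?thesis .
  qed
  have "S \<longlonglongrightarrow> \<xi> * (1 - r) * (r / (1 - r)\<^sup>2)"
    unfolding S_def using geometric_sums_times_n[of r] r
    by (intro tendsto_mult_left) (simp add: sums_def)
  moreover have "\<xi> * (1 - r) * (r / (1 - r)\<^sup>2) = \<xi> * r / (1 - r)"
  proof -
    have "\<xi> * (1 - r) * (r / (1 - r)\<^sup>2) = \<xi> * r * ((1 - r) / ((1 - r) * (1 - r)))"
      by (simp add: power2_eq_square)
    also have "(1 - r) / ((1 - r) * (1 - r)) = 1 / (1 - r)" using r by simp
    finally show ?thesis by simp
  qed
  ultimately have "(\<lambda>m. ennreal (S m)) \<longlonglongrightarrow> ennreal (\<xi> * r / (1 - r))"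
    by (intro tendsto_ennrealI) simp
  thus ?thesis using partial by (intro LIMSEQ_le_const2) auto
qed

definition left_moment :: "nat \<Rightarrow> real" where
  "left_moment K = (\<Sum>n\<le>K. real n * left_weight n)"

lemma negative_part_mean_eq_SUP:
  "(\<integral>\<^sup>+ x. ennreal (of_int (max (- x) 0)) \<partial>measure_pmf F) = (SUP K. ennreal (left_moment K))"
proof -
  define g where "g K x = ennreal (of_int (max (- x) 0)) * indicator {- int K..} x" for K x
  have "incseq g"
    by (auto simp: incseq_def le_fun_def g_def split: split_indicator)
  moreover have "(SUP K. g K x) = ennreal (of_int (max (- x) 0))" for x
  proof (rule antisym)
    show "(SUP K. g K x) \<le> ennreal (of_int (max (- x) 0))"
      by (intro SUP_least) (auto simp: g_def split: split_indicator)
    have "g (nat (- x)) x = ennreal (of_int (max (- x) 0))"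
      by (auto simp: g_def split: split_indicator)
    thus "ennreal (of_int (max (- x) 0)) \<le> (SUP K. g K x)"
      by (metis SUP_upper UNIV_I)
  qed
  moreover have "(\<integral>\<^sup>+ x. g K x \<partial>measure_pmf F) = ennreal (left_moment K)" for K
  proof -
    have "(\<integral>\<^sup>+ x. g K x \<partial>measure_pmf F) = (\<Sum>x\<in>{- int K..0}. g K x * pmf F x)"
      by (rule nn_integral_measure_pmf_support) (auto simp: g_def split: split_indicator)
    also have "\<dots> = (\<Sum>n\<le>K. g K (- int n) * pmf F (- int n))"
      by (rule sum.reindex_bij_witness[where i="\<lambda>n. - int n" and j="\<lambda>x. nat (- x)"]) auto
    also have "\<dots> = (\<Sum>n\<le>K. ennreal (real n * left_weight n))"
      by (intro sum.cong refl) (auto simp: g_def left_weight_def ennreal_mult'' split: split_indicator)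
    also have "\<dots> = ennreal (left_moment K)"
      unfolding left_moment_def using left_weight_nonneg by (subst sum_ennreal) auto
    finally show ?thesis .
  qed
  ultimately show ?thesis
    using nn_integral_monotone_convergence_SUP[of g "measure_pmf F"] by simp
qed

lemma exists_left_moment_greater:
  assumes "mean_negative F"
  shows "\<exists>K. \<xi> * r / (1 - r) < left_moment K"
proof (rule ccontr)
  assume "\<not> ?thesis"
  hence "(SUP K. ennreal (left_moment K)) \<le> ennreal (\<xi> * r / (1 - r))"
    by (intro SUP_least) (simp add: ennreal_leI not_less)
  hence "(\<integral>\<^sup>+ x. ennreal (of_int (max (- x) 0)) \<partial>measure_pmf F)
      \<le> (\<integral>\<^sup>+ x. ennreal (of_int (max x 0)) \<partial>measure_pmf F)"
    using positive_part_mean_ge negative_part_mean_eq_SUP by (metis order_trans)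
  thus False using assms unfolding mean_negative_def by simp
qed

lemma left_gf_gap:
  assumes "0 \<le> u" "u \<le> 1"
  shows "(1 - u) * u ^ K * left_moment K \<le> left_gf 1 - left_gf u"
proof -
  have "(\<lambda>n. left_weight n * 1 ^ n - left_weight n * u ^ n) sums (left_gf 1 - left_gf u)"
    unfolding left_gf_def using assms by (intro sums_diff summable_sums summable_left_gf) auto
  hence sums: "(\<lambda>n. left_weight n * (1 - u ^ n)) sums (left_gf 1 - left_gf u)"
    by (simp add: algebra_simps)
  have "(1 - u) * u ^ K * left_moment K = (\<Sum>n\<le>K. left_weight n * (real n * (1 - u) * u ^ K))"
    unfolding left_moment_def sum_distrib_left by (simp add: mult_ac)
  also have "\<dots> \<le> (\<Sum>n\<le>K. left_weight n * (1 - u ^ n))"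
  proof (intro sum_mono mult_left_mono left_weight_nonneg)
    fix n assume "n \<in> {..K}"
    hence "real n * (1 - u) * u ^ K \<le> real n * (1 - u) * u ^ n"
      using assms by (intro mult_left_mono power_decreasing) auto
    thus "real n * (1 - u) * u ^ K \<le> 1 - u ^ n"
      using mult_one_minus_power_le[OF assms, of n] by simp
  qed
  also have "\<dots> \<le> (\<Sum>n. left_weight n * (1 - u ^ n))"
    using sums assms
    by (intro sum_le_suminf)
       (auto simp: sums_iff power_le_one intro!: mult_nonneg_nonneg left_weight_nonneg)
  also have "\<dots> = left_gf 1 - left_gf u"
    using sums by (simp add: sums_iff)
  finally show ?thesis .
qed

text \<open>Near \<open>s = 1\<close> the gain \<open>(s - 1) \<xi> r / (1 - r s)\<close> on the right half-axis is beaten by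
  the loss \<open>left_gf 1 - left_gf (1/s)\<close>, which is of order \<open>(s - 1)\<close> times the left moment;
  this is where the negative mean enters.\<close>

lemma exists_gen_fun_less_1:
  assumes "mean_negative F"
  shows "\<exists>s. 1 < s \<and> s < 1 / r \<and> gen_fun s < 1"
proof -
  obtain K where K: "\<xi> * r / (1 - r) < left_moment K"
    using exists_left_moment_greater[OF assms] by blast
  have "((\<lambda>s. (1 / s) ^ Suc K * left_moment K - \<xi> * r / (1 - r * s))
      \<longlongrightarrow> (1 / 1) ^ Suc K * left_moment K - \<xi> * r / (1 - r * 1)) (at_right 1)"
    using r by (intro tendsto_intros) auto
  hence "eventually (\<lambda>s. 0 < (1 / s) ^ Suc K * left_moment K - \<xi> * r / (1 - r * s)) (at_right 1)"
    using K by (intro order_tendstoD(1)) auto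
  moreover have "eventually (\<lambda>s. s \<in> {1<..<1 / r}) (at_right 1)"
    using r by (intro eventually_at_right_real) simp
  ultimately have "eventually (\<lambda>s. 0 < (1 / s) ^ Suc K * left_moment K - \<xi> * r / (1 - r * s)
      \<and> s \<in> {1<..<1 / r}) (at_right (1::real))"
    by (rule eventually_conj)
  then obtain s where s: "1 < s" "s < 1 / r"
    and "0 < (1 / s) ^ Suc K * left_moment K - \<xi> * r / (1 - r * s)"
    using eventually_happens[of _ "at_right (1::real)"] by auto
  hence less: "\<xi> * r / (1 - r * s) < (1 / s) ^ Suc K * left_moment K" by simp
  define u where "u = 1 / s"
  have u: "0 < u" "u < 1" "1 - u = (s - 1) * u" using s by (auto simp: u_def field_simps)
  have rs: "0 < 1 - r * s" using s r by (simp add: field_simps)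
  have "left_gf 1 = 1 - \<xi>" using gen_fun_1 r by (simp add: gen_fun_def)
  moreover have "\<xi> * (1 - r) / (1 - r * s) - \<xi> = (s - 1) * (\<xi> * r / (1 - r * s))"
    using rs by (simp add: field_simps)
  ultimately have "gen_fun s - 1 = (s - 1) * (\<xi> * r / (1 - r * s)) - (left_gf 1 - left_gf u)"
    unfolding gen_fun_def u_def by simp
  also have "\<dots> \<le> (s - 1) * (\<xi> * r / (1 - r * s)) - (s - 1) * (u ^ Suc K * left_moment K)"
    using left_gf_gap[of u K] u by (simp add: mult_ac)
  also have "\<dots> < 0"
    using mult_strict_left_mono[OF less] s by (simp add: u_def)
  finally show ?thesis using s by auto
qed

lemma exists_gen_fun_root:
  assumes "mean_negative F"
  shows "\<exists>s. 1 < s \<and> s < 1 / r \<and> ((\<lambda>t. s powi t * pmf F t) has_sum 1) UNIV"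
proof -
  obtain s1 where s1: "1 < s1" "s1 < 1 / r" "gen_fun s1 < 1"
    using exists_gen_fun_less_1[OF assms] by blast
  \<comment> \<open>close enough to \<open>1/r\<close> that the right half-axis alone contributes at least \<open>1\<close>\<close>
  define s2 where "s2 = max ((s1 + 1 / r) / 2) ((1 - \<xi> * (1 - r)) / r)"
  have "s1 < (s1 + 1 / r) / 2" "(s1 + 1 / r) / 2 < 1 / r" using s1 by auto
  moreover have "(1 - \<xi> * (1 - r)) / r < 1 / r" using xi r by (simp add: divide_strict_right_mono)
  ultimately have s2: "s1 < s2" "s2 < 1 / r"
    unfolding s2_def by (metis less_max_iff_disj, metis max_less_iff_conj)
  hence "0 < 1 - r * s2" using r by (simp add: field_simps)
  have "(1 - \<xi> * (1 - r)) / r \<le> s2" unfolding s2_def by (rule max.cobounded2)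
  hence "1 - \<xi> * (1 - r) \<le> r * s2" using r by (simp add: pos_divide_le_eq mult.commute)
  hence "1 \<le> \<xi> * (1 - r) / (1 - r * s2)" using \<open>0 < 1 - r * s2\<close> by simp
  hence "1 \<le> gen_fun s2"
    unfolding gen_fun_def using left_gf_nonneg[of "1 / s2"] s1 s2 by simp
  moreover have "continuous_on {s1..s2} gen_fun"
    using s1 s2 by (intro continuous_at_imp_continuous_on ballI isCont_gen_fun) auto
  ultimately obtain s where "s1 \<le> s" "s \<le> s2" "gen_fun s = 1"
    using IVT'[of gen_fun s1 1 s2] s1 s2 by auto
  thus ?thesis using gen_fun_has_sum[of s] s1 s2 by (intro exI[of _ s]) auto
qed

text \<open>For a root \<open>1/q\<close> of the generating function, \<open>geometric_solution q\<close> satisfies the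
  first-step equation at \<open>x \<ge> 0\<close>: the jumps \<open>t \<le> x\<close> contribute \<open>c * q ^ x\<close> times the root
  equation minus its part over \<open>t > x\<close>, and \<open>c = level_prob q\<close> is the constant for which this
  missing part equals the mass \<open>\<xi> * r ^ (x + 1)\<close> of the jumps \<open>t > x\<close>.\<close>

definition level_prob :: "real \<Rightarrow> real" where
  "level_prob q = (q - r) / (1 - r)"

definition geometric_solution :: "real \<Rightarrow> int \<Rightarrow> real" where
  "geometric_solution q z = (if z < 0 then 1 else level_prob q * q ^ nat z)"

lemma one_minus_level_prob: "1 - (1 - level_prob q) * (1 - r) = q"
  using r by (simp add: level_prob_def field_simps)

lemma scaled_root_tail_has_sum:
  assumes q: "r < q" "q < 1"
  shows "((\<lambda>t. level_prob q * q ^ m * ((1 / q) powi t * pmf F t)) has_sum \<xi> * r ^ Suc m)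
    {int m<..}"
proof -
  have rq: "0 \<le> r / q" "r / q < 1" using q r by auto
  have "((\<lambda>k. (r / q) ^ k) has_sum 1 / (1 - r / q)) UNIV"
    using geometric_sums[of "r / q"] rq by (intro sums_nonneg_imp_has_sum) auto
  from has_sum_cmult_right[OF this, of "\<xi> * r ^ Suc m * (1 - r / q)"]
  have geometric: "((\<lambda>k. \<xi> * r ^ Suc m * (1 - r / q) * (r / q) ^ k) has_sum \<xi> * r ^ Suc m) UNIV"
    using q r by simp
  have summand: "level_prob q * q ^ m * ((1 / q) powi int (Suc m + k) * pmf F (int (Suc m + k)))
      = \<xi> * r ^ Suc m * (1 - r / q) * (r / q) ^ k" for k
  proof -
    have "level_prob q * q ^ m * ((1 / q) powi int (Suc m + k) * pmf F (int (Suc m + k)))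
        = (q - r) / (1 - r) * q ^ m * (\<xi> * (1 - r) * (r * r ^ m * r ^ k)) / (q * q ^ m * q ^ k)"
      unfolding pmf_of_nat power_int_of_nat by (simp add: level_prob_def power_add power_one_over)
    also have "\<dots> = \<xi> * r ^ Suc m * (1 - r / q) * (r / q) ^ k"
      using q r by (simp add: power_divide field_simps)
    finally show ?thesis .
  qed
  have "((\<lambda>t. level_prob q * q ^ m * ((1 / q) powi t * pmf F t)) has_sum \<xi> * r ^ Suc m) {int m<..}
      \<longleftrightarrow> ((\<lambda>k. \<xi> * r ^ Suc m * (1 - r / q) * (r / q) ^ k) has_sum \<xi> * r ^ Suc m) UNIV"
  proof (rule has_sum_reindex_bij_witness[where i="\<lambda>k. int (Suc m + k)" and j="\<lambda>t. nat t - Suc m"])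
    fix t assume "t \<in> {int m<..}"
    hence "t = int (Suc m + (nat t - Suc m))" by auto
    thus "\<xi> * r ^ Suc m * (1 - r / q) * (r / q) ^ (nat t - Suc m)
        = level_prob q * q ^ m * ((1 / q) powi t * pmf F t)"
      using summand[of "nat t - Suc m"] by simp
  qed auto
  thus ?thesis using geometric by simp
qed

lemma geometric_solution_harmonic:
  assumes q: "r < q" "q < 1" and root: "((\<lambda>t. (1 / q) powi t * pmf F t) has_sum 1) UNIV"
    and "0 \<le> x"
  shows "((\<lambda>t. pmf F t * geometric_solution q (x - t)) has_sum geometric_solution q x) UNIV"
proof -
  obtain m where x: "x = int m" using \<open>0 \<le> x\<close> by (metis nonneg_int_cases)
  let ?f = "\<lambda>t. level_prob q * q ^ m * ((1 / q) powi t * pmf F t)"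
  have "(?f has_sum level_prob q * q ^ m) UNIV"
    using has_sum_cmult_right[OF root, of "level_prob q * q ^ m"] by simp
  hence "(?f has_sum level_prob q * q ^ m - \<xi> * r ^ Suc m) (UNIV - {int m<..})"
    using scaled_root_tail_has_sum[OF q] by (rule has_sum_Diff) simp
  moreover have "UNIV - {int m<..} = {..x}" using x by auto
  ultimately have "(?f has_sum level_prob q * q ^ m - \<xi> * r ^ Suc m) {..x}" by simp
  hence below: "((\<lambda>t. pmf F t * geometric_solution q (x - t))
      has_sum level_prob q * q ^ m - \<xi> * r ^ Suc m) {..x}"
  proof (rule has_sum_cong[THEN iffD1, rotated])
    fix t assume "t \<in> {..x}"
    thus "?f t = pmf F t * geometric_solution q (x - t)"
      using x power_nat_diff_eq_powi[of q t m] q r by (simp add: geometric_solution_def mult_ac)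
  qed
  have "((\<lambda>t. pmf F t * geometric_solution q (x - t)) has_sum \<xi> * r ^ Suc m) {x<..}"
    using pmf_greater_has_sum[of m] x
    by (subst has_sum_cong[where g="pmf F"]) (auto simp: geometric_solution_def)
  with below have "((\<lambda>t. pmf F t * geometric_solution q (x - t))
      has_sum level_prob q * q ^ m) ({..x} \<union> {x<..})"
    by (subst diff_add_cancel[symmetric, of _ "\<xi> * r ^ Suc m"]) (rule has_sum_Un_disjoint; auto)
  moreover have "{..x} \<union> {x<..} = UNIV" by auto
  ultimately show ?thesis using x by (simp add: geometric_solution_def)
qed

lemma geometric_solution_tendsto_0:
  assumes "0 \<le> q" "q < 1"
  shows "(geometric_solution q \<longlongrightarrow> 0) at_top"
proof -
  have "((\<lambda>z. q ^ nat z) \<longlongrightarrow> 0) at_top"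
    using filterlim_compose[OF LIMSEQ_power_zero filterlim_nat_sequentially, of q] assms by simp
  hence "((\<lambda>z. level_prob q * q ^ nat z) \<longlongrightarrow> 0) at_top"
    by (rule tendsto_mult_right_zero)
  moreover have "eventually (\<lambda>z. level_prob q * q ^ nat z = geometric_solution q z) at_top"
    using eventually_ge_at_top[of 0] by eventually_elim (simp add: geometric_solution_def)
  ultimately show ?thesis by (rule Lim_transform_eventually)
qed

lemma exceed_prob_eq_geometric_solution:
  assumes "1 < s" "s < 1 / r" and root: "((\<lambda>t. s powi t * pmf F t) has_sum 1) UNIV"
  shows "exceed_prob F z = geometric_solution (1 / s) z"
proof -
  define q where "q = 1 / s"
  have q: "r < q" "q < 1" using assms r by (auto simp: q_def field_simps)
  have root: "((\<lambda>t. (1 / q) powi t * pmf F t) has_sum 1) UNIV" using root by (simp add: q_def)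
  have le: "exceed_prob F z \<le> geometric_solution q z" for z
  proof (rule exceed_prob_le_supersolution)
    show "0 \<le> geometric_solution q z" for z
      using q r by (simp add: geometric_solution_def level_prob_def)
    show "1 \<le> geometric_solution q z" if "z < 0" for z
      using that by (simp add: geometric_solution_def)
  qed (rule geometric_solution_harmonic[OF q root])
  define d where "d z = geometric_solution q z - exceed_prob F z" for z
  have "d z = 0"
  proof (rule harmonic_vanishing_eq_0)
    show "0 \<le> d z" for z using le[of z] by (simp add: d_def)
    show "d z = 0" if "z < 0" for z
      using that exceed_prob_neg[OF that] by (simp add: d_def geometric_solution_def)
    show "(d \<longlongrightarrow> 0) at_top"
    proof (rule tendsto_sandwich[OF _ _ tendsto_const geometric_solution_tendsto_0])
      show "eventually (\<lambda>z. 0 \<le> d z) at_top" "eventually (\<lambda>z. d z \<le> geometric_solution q z) at_top"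
        using le exceed_prob_nonneg by (simp_all add: d_def)
    qed (use q r in auto)
    show "((\<lambda>t. pmf F t * d (x - t)) has_sum d x) UNIV" if "0 \<le> x" for x
      using has_sum_add[OF geometric_solution_harmonic[OF q root that]
          has_sum_uminusI[OF exceed_prob_harmonic[OF that]]]
      by (simp add: d_def right_diff_distrib)
    show "0 < pmf F k" if "0 < k" for k using that by (rule pmf_pos)
  qed
  thus ?thesis by (simp add: d_def q_def)
qed

lemma gen_fun_root_unique:
  assumes "1 < s" "s < 1 / r" "((\<lambda>t. s powi t * pmf F t) has_sum 1) UNIV"
    and "1 < s'" "s' < 1 / r" "((\<lambda>t. s' powi t * pmf F t) has_sum 1) UNIV"
  shows "s = s'"
proof -
  have "level_prob (1 / s) = level_prob (1 / s')"
    using exceed_prob_eq_geometric_solution[OF assms(1-3), of 0]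
      exceed_prob_eq_geometric_solution[OF assms(4-6), of 0]
    by (simp add: geometric_solution_def)
  thus ?thesis using r by (simp add: level_prob_def)
qed

end

theorem mainTheorem2:
  fixes M :: "'a measure" and X :: "nat \<Rightarrow> 'a \<Rightarrow> int" and F :: "int pmf"
    and \<xi> r :: real
  assumes "prob_space M"
    and "prob_space.indep_vars M (\<lambda>_. count_space UNIV) X UNIV"
    and "\<And>i. distr M (count_space UNIV) (X i) = measure_pmf F"
    and "not_on_half_axis F"
    and "mean_negative F"
    and "0 < \<xi>" "\<xi> < 1" "0 < r" "r < 1"
    and "\<And>x::nat. measure_pmf.prob F {int x..} = \<xi> * r ^ x"
  defines "p \<equiv> measure M {\<omega> \<in> space M. \<exists>n. walk X n \<omega> > 0}"
  shows "p < 1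
    \<and> (\<forall>x::nat. measure M {\<omega> \<in> space M. \<exists>n. walk X n \<omega> > int x}
                 = p * (1 - (1 - p) * (1 - r)) ^ x)
    \<and> 1 < 1 / (1 - (1 - p) * (1 - r)) \<and> 1 / (1 - (1 - p) * (1 - r)) < 1 / r
    \<and> ((\<lambda>x. (1 / (1 - (1 - p) * (1 - r))) powi x * pmf F x) has_sum 1) UNIV
    \<and> (\<forall>s::real. 1 < s \<and> s < 1 / r \<and> ((\<lambda>x. s powi x * pmf F x) has_sum 1) UNIV
          \<longrightarrow> s = 1 / (1 - (1 - p) * (1 - r)))"
proof -
  interpret geometric_right_tail F \<xi> r using assms(6,8-10) by unfold_locales
  have walk: "measure M {\<omega> \<in> space M. \<exists>n. walk X n \<omega> > z} = exceed_prob F z" for z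
    using measure_walk_exceeds[OF assms(1-3)] .
  obtain s where s: "1 < s" "s < 1 / r" and root: "((\<lambda>t. s powi t * pmf F t) has_sum 1) UNIV"
    using exists_gen_fun_root[OF assms(5)] by blast
  note exceed = exceed_prob_eq_geometric_solution[OF s root]
  have p: "p = level_prob (1 / s)"
    using walk[of 0] exceed[of 0] by (simp add: p_def geometric_solution_def)
  hence q: "1 - (1 - p) * (1 - r) = 1 / s" by (simp add: one_minus_level_prob)
  have "p < 1" using p s r by (simp add: level_prob_def)
  moreover have "\<forall>x::nat. measure M {\<omega> \<in> space M. \<exists>n. walk X n \<omega> > int x} = p * (1 / s) ^ x"
    using walk exceed p by (simp add: geometric_solution_def)
  moreover have "1 < 1 / (1 / s)" "1 / (1 / s) < 1 / r"
    and "((\<lambda>x. (1 / (1 / s)) powi x * pmf F x) has_sum 1) UNIV"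
    using s root by simp_all
  moreover have "\<forall>s'. 1 < s' \<and> s' < 1 / r \<and> ((\<lambda>x. s' powi x * pmf F x) has_sum 1) UNIV
      \<longrightarrow> s' = 1 / (1 / s)"
    using gen_fun_root_unique[OF _ _ _ s root] by simp
  ultimately show ?thesis unfolding q by blast
qed

end
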